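(* Let $S$ be an $E$-solid locally inverse semigroup and $\rho$ an inverse semigroup congruence on $S$ such that every idempotent $\rho$-class is a completely simple subsemigroup of $S$; put $T=S/\rho$. For every $\alpha,\beta\in T$ with $\alpha\ge\beta$ (natural partial order of $T$) and every $s\in\alpha$ (viewing $\alpha$ as a $\rho$-class), there exists a unique $t\in\beta$ such that $s\ge t$ in the natural partial order of $S$.
   Context: A semigroup is locally inverse if it is regular and every local submonoid $eSe$ ($e$ idempotent) is inverse; $E$-solid means the subsemigroup generated by the idempotents is completely regular. The natural partial order on a regular semigroup: $s\le t$ iff $s=et=tf$ for some idempotents $e,f$. *)

theory Defs
  imports Main
begin

text \<open>Semigroup notions, stated generically for a carrier set A with a binary
operation mult (used both for S = UNIV with (*) and for the quotient S/rho).\<close>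

definition idem_in :: "('b \<Rightarrow> 'b \<Rightarrow> 'b) \<Rightarrow> 'b set \<Rightarrow> 'b \<Rightarrow> bool" where
  "idem_in mult A e \<longleftrightarrow> e \<in> A \<and> mult e e = e"

definition closed_in :: "('b \<Rightarrow> 'b \<Rightarrow> 'b) \<Rightarrow> 'b set \<Rightarrow> bool" where
  "closed_in mult A \<longleftrightarrow> (\<forall>a\<in>A. \<forall>b\<in>A. mult a b \<in> A)"

definition npo :: "('b \<Rightarrow> 'b \<Rightarrow> 'b) \<Rightarrow> 'b set \<Rightarrow> 'b \<Rightarrow> 'b \<Rightarrow> bool" where
  "npo mult A t s \<longleftrightarrow> (\<exists>e f. idem_in mult A e \<and> idem_in mult A f \<and> t = mult e s \<and> t = mult s f)"

definition regular_on :: "('b \<Rightarrow> 'b \<Rightarrow> 'b) \<Rightarrow> 'b set \<Rightarrow> bool" where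
  "regular_on mult A \<longleftrightarrow> (\<forall>a\<in>A. \<exists>x\<in>A. mult (mult a x) a = a)"

definition inverse_on :: "('b \<Rightarrow> 'b \<Rightarrow> 'b) \<Rightarrow> 'b set \<Rightarrow> bool" where
  "inverse_on mult A \<longleftrightarrow>
     (\<forall>a\<in>A. \<exists>!x. x \<in> A \<and> mult (mult a x) a = a \<and> mult (mult x a) x = x)"

definition subgroup_in :: "('b \<Rightarrow> 'b \<Rightarrow> 'b) \<Rightarrow> 'b set \<Rightarrow> bool" where
  "subgroup_in mult G \<longleftrightarrow> closed_in mult G \<and>
     (\<exists>u\<in>G. \<forall>g\<in>G. mult u g = g \<and> mult g u = g \<and> (\<exists>h\<in>G. mult g h = u \<and> mult h g = u))"

definition completely_regular_on :: "('b \<Rightarrow> 'b \<Rightarrow> 'b) \<Rightarrow> 'b set \<Rightarrow> bool" where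
  "completely_regular_on mult A \<longleftrightarrow> (\<forall>a\<in>A. \<exists>G. G \<subseteq> A \<and> a \<in> G \<and> subgroup_in mult G)"

text \<open>Simple: the only ideal is A itself, i.e. b \<in> A^1 a A^1 for all a, b.\<close>
definition simple_on :: "('b \<Rightarrow> 'b \<Rightarrow> 'b) \<Rightarrow> 'b set \<Rightarrow> bool" where
  "simple_on mult A \<longleftrightarrow> (\<forall>a\<in>A. \<forall>b\<in>A.
      b = a \<or> (\<exists>x\<in>A. b = mult x a) \<or> (\<exists>y\<in>A. b = mult a y) \<or>
      (\<exists>x\<in>A. \<exists>y\<in>A. b = mult (mult x a) y))"

definition primitive_idem_in :: "('b \<Rightarrow> 'b \<Rightarrow> 'b) \<Rightarrow> 'b set \<Rightarrow> 'b \<Rightarrow> bool" where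
  "primitive_idem_in mult A e \<longleftrightarrow> idem_in mult A e \<and>
     (\<forall>f. idem_in mult A f \<and> mult e f = f \<and> mult f e = f \<longrightarrow> f = e)"

definition completely_simple_subsemigroup :: "('b \<Rightarrow> 'b \<Rightarrow> 'b) \<Rightarrow> 'b set \<Rightarrow> bool" where
  "completely_simple_subsemigroup mult A \<longleftrightarrow> closed_in mult A \<and> simple_on mult A \<and>
     (\<exists>e. primitive_idem_in mult A e)"

definition gen_subsemigroup :: "('b \<Rightarrow> 'b \<Rightarrow> 'b) \<Rightarrow> 'b set \<Rightarrow> 'b set" where
  "gen_subsemigroup mult X = \<Inter>{B. X \<subseteq> B \<and> closed_in mult B}"

definition locally_inverse :: "'a::semigroup_mult itself \<Rightarrow> bool" where
  "locally_inverse _ \<longleftrightarrow> regular_on ((*) :: 'a \<Rightarrow> 'a \<Rightarrow> 'a) UNIV \<and>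
     (\<forall>e::'a. e * e = e \<longrightarrow> inverse_on (*) {e * s * e | s. True})"

definition E_solid :: "'a::semigroup_mult itself \<Rightarrow> bool" where
  "E_solid _ \<longleftrightarrow> completely_regular_on ((*) :: 'a \<Rightarrow> 'a \<Rightarrow> 'a)
      (gen_subsemigroup (*) {e::'a. e * e = e})"

definition congruence :: "('a::semigroup_mult \<times> 'a) set \<Rightarrow> bool" where
  "congruence \<rho> \<longleftrightarrow> equiv UNIV \<rho> \<and>
     (\<forall>a b c. (a, b) \<in> \<rho> \<longrightarrow> (c * a, c * b) \<in> \<rho> \<and> (a * c, b * c) \<in> \<rho>)"

definition qmult :: "('a::semigroup_mult \<times> 'a) set \<Rightarrow> 'a set \<Rightarrow> 'a set \<Rightarrow> 'a set" where
  "qmult \<rho> \<alpha> \<beta> = \<rho> `` {a * b | a b. a \<in> \<alpha> \<and> b \<in> \<beta>}"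

definition inverse_congruence :: "('a::semigroup_mult \<times> 'a) set \<Rightarrow> bool" where
  "inverse_congruence \<rho> \<longleftrightarrow> congruence \<rho> \<and> inverse_on (qmult \<rho>) (UNIV // \<rho>)"

end

theory Submission
  imports Defs
begin

(* Let s' be an inverse of s and e = s s'.
   Existence: if beta = [g] alpha with [g] idempotent in T, then the class of e g e is
   idempotent, because idempotents of the inverse semigroup T commute; by regularity it contains
   an idempotent f of the local submonoid eSe, and f s lies below s and in beta.
   Uniqueness: every t <= s is h s for the idempotent h = t s' of eSe. For t1, t2 in beta the
   idempotents h1, h2 lie in one idempotent rho-class, which is completely simple, so all its
   idempotents are primitive. They commute because eSe is inverse, and h1 h2 lies below both,
   whence h1 = h2. *)

locale semigroup_on =
  fixes mult :: "'b \<Rightarrow> 'b \<Rightarrow> 'b" (infixl "\<cdot>" 70)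
    and A :: "'b set"
  assumes closed: "closed_in mult A"
    and assoc: "\<lbrakk>a \<in> A; b \<in> A; c \<in> A\<rbrakk> \<Longrightarrow> (a \<cdot> b) \<cdot> c = a \<cdot> (b \<cdot> c)"
begin

lemma mult_closed [simp]: "a \<in> A \<Longrightarrow> b \<in> A \<Longrightarrow> a \<cdot> b \<in> A"
  using closed by (simp add: closed_in_def)

end

locale inverse_semigroup_on = semigroup_on +
  assumes inverse: "inverse_on mult A"
begin

lemma inverse_unique:
  assumes "a \<in> A" "x \<in> A" "y \<in> A"
    and "a \<cdot> x \<cdot> a = a" "x \<cdot> a \<cdot> x = x"
    and "a \<cdot> y \<cdot> a = a" "y \<cdot> a \<cdot> y = y"
  shows "x = y"
  using inverse assms unfolding inverse_on_def by blast

lemma idem_mult_idem: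
  assumes e: "e \<in> A" "e \<cdot> e = e" and f: "f \<in> A" "f \<cdot> f = f"
  shows "(e \<cdot> f) \<cdot> (e \<cdot> f) = e \<cdot> f"
proof -
  define p where "p = e \<cdot> f"
  have p: "p \<in> A" using e f by (simp add: p_def)
  obtain x where x: "x \<in> A" "p \<cdot> x \<cdot> p = p" "x \<cdot> p \<cdot> x = x"
    using inverse p unfolding inverse_on_def by blast
  have ee: "e \<cdot> (e \<cdot> z) = e \<cdot> z" and ff: "f \<cdot> (f \<cdot> z) = f \<cdot> z" if "z \<in> A" for z
    using e f that by (simp_all flip: assoc)
  have xpx: "x \<cdot> (e \<cdot> (f \<cdot> (x \<cdot> z))) = x \<cdot> z" if "z \<in> A" for z
  proof -
    have "x \<cdot> (e \<cdot> (f \<cdot> (x \<cdot> z))) = (x \<cdot> p \<cdot> x) \<cdot> z"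
      using e f x(1) that by (simp add: p_def assoc)
    then show ?thesis using x(3) by simp
  qed
  txt \<open>The conjugate \<open>f \<cdot> x \<cdot> e\<close> is again an inverse of \<open>p\<close>, hence equals \<open>x\<close>.\<close>
  have "f \<cdot> x \<cdot> e = x"
  proof (rule inverse_unique[OF p _ x(1) _ _ x(2,3)])
    show "p \<cdot> (f \<cdot> x \<cdot> e) \<cdot> p = p" using x(2) e f x by (simp add: p_def assoc ee ff)
    show "f \<cdot> x \<cdot> e \<cdot> p \<cdot> (f \<cdot> x \<cdot> e) = f \<cdot> x \<cdot> e" using e f x by (simp add: p_def assoc ee ff xpx)
  qed (use e f x in simp)
  then have xx: "x \<cdot> x = x"
    using e f x xpx by (metis assoc mult_closed)
  have "p = x"
    by (rule inverse_unique[OF x(1) p x(1)]) (use x xx in \<open>simp_all add: assoc\<close>)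
  then show ?thesis using xx p_def by simp
qed

lemma idem_comm:
  assumes e: "e \<in> A" "e \<cdot> e = e" and f: "f \<in> A" "f \<cdot> f = f"
  shows "e \<cdot> f = f \<cdot> e"
proof -
  have ef: "e \<cdot> (f \<cdot> (e \<cdot> f)) = e \<cdot> f" and fe: "f \<cdot> (e \<cdot> (f \<cdot> e)) = f \<cdot> e"
    using idem_mult_idem[OF e f] idem_mult_idem[OF f e] e f by (simp_all add: assoc)
  have ee: "e \<cdot> (e \<cdot> z) = e \<cdot> z" and ff: "f \<cdot> (f \<cdot> z) = f \<cdot> z" if "z \<in> A" for z
    using e f that by (simp_all flip: assoc)
  txt \<open>Both the idempotent \<open>e \<cdot> f\<close> and \<open>f \<cdot> e\<close> are inverses of \<open>e \<cdot> f\<close>.\<close>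
  show ?thesis
    by (rule inverse_unique[of "e \<cdot> f"])
       (use e f ef fe in \<open>simp_all add: assoc ee ff\<close>)
qed

end

lemma simple_on_idem_factor:
  fixes A :: "'a::semigroup_mult set"
  assumes "simple_on (*) A" "e \<in> A" "e * e = e" "b \<in> A"
  shows "\<exists>x\<in>A. \<exists>y\<in>A. b = x * e * y"
proof -
  have "b = e \<or> (\<exists>x\<in>A. b = x * e) \<or> (\<exists>y\<in>A. b = e * y) \<or> (\<exists>x\<in>A. \<exists>y\<in>A. b = x * e * y)"
    using assms unfolding simple_on_def by blast
  then show ?thesis
    using assms(2,3) by (metis mult.assoc)
qed

lemma primitive_idem_transfer:
  fixes A :: "'a::semigroup_mult set"
  assumes closed: "closed_in (*) A" and e: "primitive_idem_in (*) A e"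
    and ab: "a \<in> A" "b \<in> A" "a * b = e" "e * a = a" "b * e = b"
  shows "primitive_idem_in (*) A (b * a)"
proof -
  have "w = b * a" if w: "w \<in> A" "w * w = w" "b * a * w = w" "w * (b * a) = w" for w
  proof -
    have "a * w * b \<in> A" using closed w ab by (simp add: closed_in_def)
    moreover have "a * w * b * (a * w * b) = a * w * b" by (metis mult.assoc w(2,3))
    moreover have "e * (a * w * b) = a * w * b" "a * w * b * e = a * w * b"
      by (metis ab(4,5) mult.assoc)+
    ultimately have awb: "a * w * b = e"
      using e unfolding primitive_idem_in_def idem_in_def by blast
    have "w = b * (a * w * b) * a" using w(3,4) by (simp add: mult.assoc)
    then show ?thesis using awb ab(5) by simp
  qed
  moreover have "b * a \<in> A" using closed ab by (simp add: closed_in_def)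
  moreover have "b * a * (b * a) = b * a" by (metis ab(3,5) mult.assoc)
  ultimately show ?thesis unfolding primitive_idem_in_def idem_in_def by blast
qed

text \<open>Writing \<open>f = x e y\<close> with \<open>e\<close> primitive, \<open>a = f x e\<close> and \<open>b = e y f\<close> satisfy
  \<open>a b = f\<close> and \<open>b a = e\<close>, and primitivity transfers from \<open>b a\<close> to \<open>a b\<close>.\<close>
lemma completely_simple_idem_primitive:
  fixes A :: "'a::semigroup_mult set"
  assumes cs: "completely_simple_subsemigroup (*) A" and f: "f \<in> A" "f * f = f"
  shows "primitive_idem_in (*) A f"
proof -
  obtain e where closed: "closed_in (*) A" and simple: "simple_on (*) A"
    and e: "primitive_idem_in (*) A e"
    using cs unfolding completely_simple_subsemigroup_def by blast
  have eA: "e \<in> A" "e * e = e" using e by (simp_all add: primitive_idem_in_def idem_in_def)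
  obtain x y where xy: "x \<in> A" "y \<in> A" "f = x * e * y"
    using simple_on_idem_factor[OF simple eA f(1)] by blast
  define a where "a = f * x * e"
  define b where "b = e * y * f"
  have ab: "a * b = f" using xy f(2) eA(2) unfolding a_def b_def by (metis mult.assoc)
  have A: "a \<in> A" "b \<in> A" using closed xy f eA unfolding a_def b_def closed_in_def by blast+
  have "b * a \<in> A" using closed A by (simp add: closed_in_def)
  moreover have "b * a * (b * a) = b * a" by (metis ab b_def f(2) mult.assoc)
  moreover have "e * (b * a) = b * a" "b * a * e = b * a"
    unfolding a_def b_def by (metis eA(2) mult.assoc)+
  ultimately have "b * a = e" using e unfolding primitive_idem_in_def idem_in_def by blast
  then show ?thesis
    using primitive_idem_transfer[OF closed e A(2,1)] ab eA(2)
    unfolding a_def b_def by (metis mult.assoc)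
qed

lemma primitive_idems_commute_eq:
  fixes A :: "'a::semigroup_mult set"
  assumes closed: "closed_in (*) A"
    and h: "primitive_idem_in (*) A h" and k: "primitive_idem_in (*) A k"
    and comm: "h * k = k * h"
  shows "h = k"
proof -
  have hk: "h \<in> A" "h * h = h" "k \<in> A" "k * k = k"
    using h k by (simp_all add: primitive_idem_in_def idem_in_def)
  have "h * k \<in> A" using closed hk by (simp add: closed_in_def)
  moreover have "h * k * (h * k) = h * k" by (metis comm hk(2,4) mult.assoc)
  moreover have "h * (h * k) = h * k" "h * k * h = h * k" "k * (h * k) = h * k" "h * k * k = h * k"
    by (metis comm hk(2,4) mult.assoc)+
  ultimately have "h * k = h" "h * k = k"
    using h k unfolding primitive_idem_in_def idem_in_def by blast+
  then show ?thesis by simp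
qed

lemma congruence_mult:
  assumes "congruence \<rho>" "(a, a') \<in> \<rho>" "(b, b') \<in> \<rho>"
  shows "(a * b, a' * b') \<in> \<rho>"
proof -
  have "(a * b, a' * b) \<in> \<rho>" "(a' * b, a' * b') \<in> \<rho>"
    using assms unfolding congruence_def by blast+
  then show ?thesis
    using assms(1) unfolding congruence_def equiv_def by (meson transD)
qed

lemma qmult_classes:
  assumes "congruence \<rho>"
  shows "qmult \<rho> (\<rho> `` {a}) (\<rho> `` {b}) = \<rho> `` {a * b}"
proof -
  have eq: "equiv UNIV \<rho>" using assms by (simp add: congruence_def)
  let ?P = "{x * y | x y. x \<in> \<rho> `` {a} \<and> y \<in> \<rho> `` {b}}"
  have "\<rho> `` {p} = \<rho> `` {a * b}" if "p \<in> ?P" for p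
    using that congruence_mult[OF assms] equiv_class_eq[OF eq] by blast
  moreover have "a * b \<in> ?P" using eq by (auto simp: equiv_def refl_on_def)
  ultimately show ?thesis unfolding qmult_def by blast
qed

lemma quotient_semigroup_on:
  assumes "congruence \<rho>"
  shows "semigroup_on (qmult \<rho>) (UNIV // \<rho>)"
proof
  show "closed_in (qmult \<rho>) (UNIV // \<rho>)"
    by (auto simp: closed_in_def qmult_classes[OF assms] quotientI elim!: quotientE)
qed (auto simp: qmult_classes[OF assms] mult.assoc elim!: quotientE)

lemma inverse_congruence_idem_mult_idem:
  assumes ic: "inverse_congruence \<rho>" and u: "(u * u, u) \<in> \<rho>" and v: "(v * v, v) \<in> \<rho>"
  shows "(u * v * (u * v), u * v) \<in> \<rho>"
proof -
  have c: "congruence \<rho>" and eq: "equiv UNIV \<rho>"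
    using ic by (simp_all add: inverse_congruence_def congruence_def)
  interpret T: inverse_semigroup_on "qmult \<rho>" "UNIV // \<rho>"
    using quotient_semigroup_on[OF c] ic
    by (simp add: inverse_congruence_def inverse_semigroup_on_def inverse_semigroup_on_axioms_def)
  have "qmult \<rho> (qmult \<rho> (\<rho> `` {u}) (\<rho> `` {v})) (qmult \<rho> (\<rho> `` {u}) (\<rho> `` {v}))
      = qmult \<rho> (\<rho> `` {u}) (\<rho> `` {v})"
    using u v eq by (intro T.idem_mult_idem) (auto simp: qmult_classes[OF c] quotientI equiv_class_eq)
  then show ?thesis
    using eq by (simp add: qmult_classes[OF c] eq_equiv_class_iff)
qed

lemma locally_inverse_idem_comm:
  fixes e :: "'a::semigroup_mult"
  assumes li: "locally_inverse TYPE('a)" and e: "e * e = e"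
    and h: "h * h = h" "e * h = h" "h * e = h"
    and k: "k * k = k" "e * k = k" "k * e = k"
  shows "h * k = k * h"
proof -
  let ?eSe = "{e * s * e | s. True}"
  interpret eSe: inverse_semigroup_on "(*)" ?eSe
  proof
    have "e * s * e * (e * t * e) = e * (s * e * e * t) * e" for s t
      by (simp add: mult.assoc)
    then show "closed_in (*) ?eSe"
      unfolding closed_in_def by blast
    show "inverse_on (*) ?eSe" using li e by (simp add: locally_inverse_def)
  qed (simp add: mult.assoc)
  have "h = e * h * e" "k = e * k * e" using h k by (simp_all add: mult.assoc)
  then have "h \<in> ?eSe" "k \<in> ?eSe" by blast+
  then show ?thesis using h k by (intro eSe.idem_comm) simp_all
qed

lemma npo_idem_mult:
  fixes s :: "'a::semigroup_mult"
  assumes f: "f * f = f" "s * s' * f = f" "f * (s * s') = f"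
  shows "npo (*) UNIV (f * s) s"
proof -
  have "s' * f * s * (s' * f * s) = s' * (f * (s * s')) * f * s" by (simp add: mult.assoc)
  also have "\<dots> = s' * (f * f) * s" by (simp only: f(3)) (simp add: mult.assoc)
  finally have "s' * f * s * (s' * f * s) = s' * f * s" by (simp only: f(1))
  moreover have "s * (s' * f * s) = f * s" using f(2) by (simp flip: mult.assoc)
  ultimately show ?thesis using f(1) unfolding npo_def idem_in_def by force
qed

lemma npo_idem_factor:
  fixes s :: "'a::semigroup_mult"
  assumes t: "npo (*) UNIV t s" and s: "s * s' * s = s"
  shows "t * s' * (t * s') = t * s'" "s * s' * (t * s') = t * s'"
    and "t * s' * (s * s') = t * s'" "t * s' * s = t"
proof -
  obtain e f where e: "e * e = e" "t = e * s" and f: "f * f = f" "t = s * f"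
    using t unfolding npo_def idem_in_def by blast
  have "t * s' * s = e * (s * s' * s)" using e(2) by (simp add: mult.assoc)
  then show ts: "t * s' * s = t" using s e(2) by simp
  have tf: "t * f = t" using f by (simp add: mult.assoc)
  have "t * s' * (t * s') = t * s' * s * f * s'" using f(2) by (simp add: mult.assoc)
  then show "t * s' * (t * s') = t * s'" using ts tf by simp
  have "s * s' * (t * s') = s * s' * s * f * s'" using f(2) by (simp add: mult.assoc)
  then show "s * s' * (t * s') = t * s'" using s f(2) by simp
  have "t * s' * (s * s') = t * s' * s * s'" by (simp add: mult.assoc)
  then show "t * s' * (s * s') = t * s'" using ts by simp
qed

lemma idem_class_contains_idem:
  fixes a :: "'a::semigroup_mult"
  assumes c: "congruence \<rho>" and reg: "regular_on (*) (UNIV :: 'a set)"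
    and a: "(a * a, a) \<in> \<rho>"
  obtains x where "a * x * a * (a * x * a) = a * x * a" "(a * x * a, a) \<in> \<rho>"
proof -
  have eq: "equiv UNIV \<rho>" using c by (simp add: congruence_def)
  obtain z where z: "a * a * z * (a * a) = a * a" using reg unfolding regular_on_def by blast
  txt \<open>\<open>x\<close> is an inverse of \<open>a * a\<close>.\<close>
  define x where "x = z * (a * a) * z"
  have "x * (a * a) * x = z * (a * a * z * (a * a)) * z * (a * a) * z"
    unfolding x_def by (simp add: mult.assoc)
  also have "\<dots> = z * (a * a) * z * (a * a) * z" by (simp only: z)
  also have "\<dots> = z * (a * a * z * (a * a)) * z" by (simp add: mult.assoc)
  also have "\<dots> = x" by (simp only: z x_def)
  finally have "a * (x * (a * a) * x) * a = a * x * a" by simp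
  then have idem: "a * x * a * (a * x * a) = a * x * a" by (simp add: mult.assoc)
  have "(a * a * x * (a * a), a * x * a) \<in> \<rho>"
    using congruence_mult[OF c congruence_mult[OF c a] a] eq
    by (simp add: mult.assoc equiv_def refl_on_def)
  moreover have "a * a * x * (a * a) = a * a" unfolding x_def using z by (simp flip: mult.assoc)
  ultimately have "(a * x * a, a) \<in> \<rho>"
    using a eq by (metis equivE symD transD)
  with idem show thesis by (rule that)
qed

lemma quotient_npo_representatives:
  fixes s :: "'a::semigroup_mult"
  assumes c: "congruence \<rho>" and \<alpha>: "\<alpha> \<in> UNIV // \<rho>" "s \<in> \<alpha>"
    and le: "npo (qmult \<rho>) (UNIV // \<rho>) \<beta> \<alpha>"
  obtains g p where "(g * g, g) \<in> \<rho>" "(g * s, s * p) \<in> \<rho>" "\<beta> = \<rho> `` {s * p}"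
proof -
  have eq: "equiv UNIV \<rho>" using c by (simp add: congruence_def)
  have \<alpha>s: "\<alpha> = \<rho> `` {s}" using \<alpha> eq by (metis Image_singleton_iff equiv_class_eq quotientE)
  obtain \<epsilon> \<phi> where \<epsilon>: "\<epsilon> \<in> UNIV // \<rho>" "qmult \<rho> \<epsilon> \<epsilon> = \<epsilon>" "\<beta> = qmult \<rho> \<epsilon> \<alpha>"
    and \<phi>: "\<phi> \<in> UNIV // \<rho>" "\<beta> = qmult \<rho> \<alpha> \<phi>"
    using le unfolding npo_def idem_in_def by blast
  obtain g p where "\<epsilon> = \<rho> `` {g}" "\<phi> = \<rho> `` {p}" using \<epsilon>(1) \<phi>(1) by (auto elim!: quotientE)
  with \<epsilon> \<phi> \<alpha>s have "(g * g, g) \<in> \<rho>" "(g * s, s * p) \<in> \<rho>" "\<beta> = \<rho> `` {s * p}"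
    using eq by (simp_all add: qmult_classes[OF c] eq_equiv_class_iff[OF eq]) (meson equivE symD)
  then show thesis by (rule that)
qed

lemma below_in_class_exists:
  fixes s :: "'a::semigroup_mult"
  assumes reg: "regular_on (*) (UNIV :: 'a set)" and ic: "inverse_congruence \<rho>"
    and \<alpha>: "\<alpha> \<in> UNIV // \<rho>" "s \<in> \<alpha>" and le: "npo (qmult \<rho>) (UNIV // \<rho>) \<beta> \<alpha>"
  shows "\<exists>t\<in>\<beta>. npo (*) UNIV t s"
proof -
  have c: "congruence \<rho>" using ic by (simp add: inverse_congruence_def)
  have eq: "equiv UNIV \<rho>" using c by (simp add: congruence_def)
  have refl: "(x, x) \<in> \<rho>" for x using eq by (simp add: equiv_def refl_on_def)
  obtain g p where g: "(g * g, g) \<in> \<rho>" and gs: "(g * s, s * p) \<in> \<rho>" and \<beta>: "\<beta> = \<rho> `` {s * p}"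
    using quotient_npo_representatives[OF c \<alpha> le] by blast
  obtain s' where s': "s * s' * s = s" using reg unfolding regular_on_def by blast
  define e where "e = s * s'"
  have e: "e * e = e" "e * s = s"
    using s' unfolding e_def by (simp_all flip: mult.assoc)
  define a where "a = e * g * e"
  have e_cls: "(e * e, e) \<in> \<rho>" using e(1) refl by simp
  have "(a * a, a) \<in> \<rho>"
    unfolding a_def
    by (rule inverse_congruence_idem_mult_idem[OF ic inverse_congruence_idem_mult_idem[OF ic e_cls g] e_cls])
  then obtain x where "a * x * a * (a * x * a) = a * x * a" "(a * x * a, a) \<in> \<rho>"
    by (rule idem_class_contains_idem[OF c reg])
  moreover define f where "f = a * x * a"
  ultimately have f: "f * f = f" "(f, a) \<in> \<rho>" by simp_all
  have ef: "e * f = f" "f * e = f"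
    using e(1) unfolding f_def a_def by (simp flip: mult.assoc, simp add: mult.assoc)
  have "(f * s, e * (g * s)) \<in> \<rho>"
    using congruence_mult[OF c f(2) refl[of s]] e(2) by (simp add: a_def mult.assoc)
  moreover have "(e * (g * s), e * (s * p)) \<in> \<rho>" using gs by (rule congruence_mult[OF c refl])
  moreover have "e * (s * p) = s * p" using e(2) by (simp flip: mult.assoc)
  ultimately have "(s * p, f * s) \<in> \<rho>" using eq by (metis equivE symD transD)
  then have "f * s \<in> \<beta>" using \<beta> by simp
  moreover have "npo (*) UNIV (f * s) s" using npo_idem_mult[OF f(1) ef[unfolded e_def]] .
  ultimately show ?thesis by blast
qed

lemma below_in_class_unique:
  fixes s :: "'a::semigroup_mult"
  assumes li: "locally_inverse TYPE('a)" and c: "congruence \<rho>"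
    and cs: "\<forall>\<gamma>\<in>UNIV // \<rho>. qmult \<rho> \<gamma> \<gamma> = \<gamma> \<longrightarrow> completely_simple_subsemigroup (*) \<gamma>"
    and t: "npo (*) UNIV t\<^sub>1 s" "npo (*) UNIV t\<^sub>2 s" "(t\<^sub>1, t\<^sub>2) \<in> \<rho>"
  shows "t\<^sub>1 = t\<^sub>2"
proof -
  have eq: "equiv UNIV \<rho>" using c by (simp add: congruence_def)
  obtain s' where s': "s * s' * s = s"
    using li unfolding locally_inverse_def regular_on_def by blast
  define h\<^sub>1 h\<^sub>2 where "h\<^sub>1 = t\<^sub>1 * s'" and "h\<^sub>2 = t\<^sub>2 * s'"
  note h\<^sub>1 = npo_idem_factor[OF t(1) s', folded h\<^sub>1_def]
  note h\<^sub>2 = npo_idem_factor[OF t(2) s', folded h\<^sub>2_def]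
  define \<gamma> where "\<gamma> = \<rho> `` {h\<^sub>1}"
  have "(h\<^sub>1, h\<^sub>2) \<in> \<rho>"
    unfolding h\<^sub>1_def h\<^sub>2_def using t(3) eq by (intro congruence_mult[OF c]) (simp_all add: equiv_def refl_on_def)
  then have h\<^sub>\<gamma>: "h\<^sub>1 \<in> \<gamma>" "h\<^sub>2 \<in> \<gamma>" unfolding \<gamma>_def using eq by (simp_all add: equiv_def refl_on_def)
  have "\<gamma> \<in> UNIV // \<rho>" unfolding \<gamma>_def by (rule quotientI) simp
  moreover have "qmult \<rho> \<gamma> \<gamma> = \<gamma>" unfolding \<gamma>_def qmult_classes[OF c] h\<^sub>1(1) ..
  ultimately have \<gamma>: "completely_simple_subsemigroup (*) \<gamma>" using cs by blast
  have "h\<^sub>1 = h\<^sub>2"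
  proof (rule primitive_idems_commute_eq)
    show "closed_in (*) \<gamma>" using \<gamma> by (simp add: completely_simple_subsemigroup_def)
    show "primitive_idem_in (*) \<gamma> h\<^sub>1" "primitive_idem_in (*) \<gamma> h\<^sub>2"
      using completely_simple_idem_primitive[OF \<gamma>] h\<^sub>\<gamma> h\<^sub>1(1) h\<^sub>2(1) by blast+
    have "s * s' * (s * s') = s * s'" using s' by (simp flip: mult.assoc)
    then show "h\<^sub>1 * h\<^sub>2 = h\<^sub>2 * h\<^sub>1"
      using locally_inverse_idem_comm[OF li] h\<^sub>1(1-3) h\<^sub>2(1-3) by blast
  qed
  then show ?thesis using h\<^sub>1(4) h\<^sub>2(4) by simp
qed

theorem lemma4p1:
  fixes \<rho> :: "('a::semigroup_mult \<times> 'a) set"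
  assumes "E_solid TYPE('a)"
    and "locally_inverse TYPE('a)"
    and "inverse_congruence \<rho>"
    and "\<forall>\<alpha>\<in>UNIV // \<rho>. qmult \<rho> \<alpha> \<alpha> = \<alpha> \<longrightarrow> completely_simple_subsemigroup (*) \<alpha>"
  shows "\<forall>\<alpha>\<in>UNIV // \<rho>. \<forall>\<beta>\<in>UNIV // \<rho>. npo (qmult \<rho>) (UNIV // \<rho>) \<beta> \<alpha> \<longrightarrow>
           (\<forall>s\<in>\<alpha>. \<exists>!t. t \<in> \<beta> \<and> npo (*) UNIV t s)"
proof (intro ballI impI)
  fix \<alpha> \<beta> s
  assume \<alpha>: "\<alpha> \<in> UNIV // \<rho>" and \<beta>: "\<beta> \<in> UNIV // \<rho>"
    and le: "npo (qmult \<rho>) (UNIV // \<rho>) \<beta> \<alpha>" and s: "s \<in> \<alpha>"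
  have c: "congruence \<rho>" using assms(3) by (simp add: inverse_congruence_def)
  have reg: "regular_on (*) (UNIV :: 'a set)" using assms(2) by (simp add: locally_inverse_def)
  obtain t where "t \<in> \<beta>" "npo (*) UNIV t s"
    using below_in_class_exists[OF reg assms(3) \<alpha> s le] by blast
  moreover have "t\<^sub>1 = t\<^sub>2" if "t\<^sub>1 \<in> \<beta>" "npo (*) UNIV t\<^sub>1 s" "t\<^sub>2 \<in> \<beta>" "npo (*) UNIV t\<^sub>2 s" for t\<^sub>1 t\<^sub>2
  proof (rule below_in_class_unique[OF assms(2) c assms(4) that(2,4)])
    show "(t\<^sub>1, t\<^sub>2) \<in> \<rho>"
      using quotient_eq_iff[OF _ \<beta> \<beta> that(1,3)] c by (simp add: congruence_def)
  qed
  ultimately show "\<exists>!t. t \<in> \<beta> \<and> npo (*) UNIV t s" by blast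
qed

end
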